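(* The tableau calculus $\mathbf{TAB}_{\mathbf{IB}}$ has the termination property: for every tableau of $\mathbf{TAB}_{\mathbf{IB}}$, every branch of it is finite.
   Context: Hybrid language: fix disjoint countably infinite sets $\mathbf{Prop}$ (propositional variables) and $\mathbf{Nom}$ (nominals). Formulas: $\varphi ::= p \mid i \mid \neg\varphi \mid \varphi\land\varphi \mid \Diamond\varphi \mid @_i\varphi$ with $p\in\mathbf{Prop}$, $i\in\mathbf{Nom}$; $\Box\varphi$ abbreviates $\neg\Diamond\neg\varphi$. Tableau calculus $\mathbf{TAB}_{\mathbf{IB}}$. A tableau is a well-founded tree whose nodes are formulas of the form $@_i\varphi$; its root is a formula $@_i\varphi$ (the root formula) where $i$ does not occur in $\varphi$. A branch is a maximal path; $\varphi\in\Theta$ means $\varphi$ occurs on branch $\Theta$. Each branch is extended by applying the rules below to its formulas as often as possible, except that no further formula is added to a branch once either (i) every new formula generated by applying any rule already occurs on the branch, or (ii) the branch is closed, i.e. contains $@_i\varphi$ and $@_i\neg\varphi$ for some formula $\varphi$ and nominal $i$. An accessibility formula is a formula $@_i\Diamond j$ added by rule $[\Diamond]$ (with $j$ the new nominal). Rules (premises already on the branch; conclusions added to it): [$\neg\neg$] from $@_i\neg\neg\varphi$ add $@_i\varphi$; [$\land$] from $@_i(\varphi\land\psi)$ add $@_i\varphi$ and $@_i\psi$; [$\neg\land$] from $@_i\neg(\varphi\land\psi)$ split the branch into one extended by $@_i\neg\varphi$ and one extended by $@_i\neg\psi$; [$\Diamond$] from $@_i\Diamond\varphi$, which is not an accessibility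 formula, add $@_i\Diamond j$ and $@_j\varphi$ where $j$ is a nominal not occurring on the branch; this rule is applied at most once per formula, and only if $i$ is a quasi-urfather on the branch (defined below); [$\neg\Diamond$] from $@_i\neg\Diamond\varphi$ and $@_i\Diamond j$ add $@_j\neg\varphi$; [$\Box_{sym}$] from $@_i\Box\varphi$ and $@_j\Diamond i$ add $@_j\varphi$; [$@$] from $@_i@_j\varphi$ add $@_j\varphi$; [$\neg@$] from $@_i\neg@_j\varphi$ add $@_j\neg\varphi$; [$Id$] from $@_i\varphi$, which is not an accessibility formula, and $@_i j$ add $@_j\varphi$; [$Ref$] for any nominal $i$ occurring on the branch add $@_i i$; ($\mathcal{I}$) for any nominal $i$ occurring on the branch add $@_i\neg\Diamond i$. Auxiliary notions for a branch $\Theta$. $@_i\varphi$ is a quasi-subformula of $@_j\psi$ if $\varphi$ is a subformula of $\psi$, or $\varphi=\neg\chi$ with $\chi$ a subformula of $\psi$. For a nominal $i$ occurring in $\Theta$, $T^\Theta(i)=\{\varphi \mid @_i\varphi\in\Theta$ and $@_i\varphi$ is a quasi-subformula of the root formula$\}$. Nominals $i,j$ are twins in $\Theta$ if $T^\Theta(i)=T^\Theta(j)$. $i\prec_\Theta j$ if $j$ was introduced by applying $[\Diamond]$ to a formula $@_i\Diamond\varphi$ (equivalently, the accessibility formula $@_i\Diamond j$ is in $\Theta$); $\prec_\Theta^*$ is its reflexive transitive closure. A nominal $i$ is a quasi-urfather on $\Theta$ if there are no twins $j\neq k$ with $j\prec_\Theta^* i$ and $k\prec_\Theta^* i$. *)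

theory Defs
  imports Main
begin

datatype fm = Pro nat | Nom nat | Neg fm | Con fm fm | Dia fm | At nat fm

abbreviation Box :: "fm \<Rightarrow> fm" where "Box \<phi> \<equiv> Neg (Dia (Neg \<phi>))"

text \<open>A tableau node is a satisfaction statement @_i phi, represented as the pair (i, phi).\<close>
type_synonym node = "nat \<times> fm"

fun nomsf :: "fm \<Rightarrow> nat set" where
  "nomsf (Pro p) = {}"
| "nomsf (Nom i) = {i}"
| "nomsf (Neg \<phi>) = nomsf \<phi>"
| "nomsf (Con \<phi> \<psi>) = nomsf \<phi> \<union> nomsf \<psi>"
| "nomsf (Dia \<phi>) = nomsf \<phi>"
| "nomsf (At i \<phi>) = insert i (nomsf \<phi>)"

definition noms_br :: "node set \<Rightarrow> nat set" where
  "noms_br S = (\<Union>(i, \<phi>)\<in>S. insert i (nomsf \<phi>))"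

fun subf :: "fm \<Rightarrow> fm set" where
  "subf (Pro p) = {Pro p}"
| "subf (Nom i) = {Nom i}"
| "subf (Neg \<phi>) = insert (Neg \<phi>) (subf \<phi>)"
| "subf (Con \<phi> \<psi>) = insert (Con \<phi> \<psi>) (subf \<phi> \<union> subf \<psi>)"
| "subf (Dia \<phi>) = insert (Dia \<phi>) (subf \<phi>)"
| "subf (At i \<phi>) = insert (At i \<phi>) (subf \<phi>)"

definition qsub :: "node \<Rightarrow> node \<Rightarrow> bool" where
  "qsub a r \<longleftrightarrow> snd a \<in> subf (snd r) \<or> (\<exists>\<chi>. snd a = Neg \<chi> \<and> \<chi> \<in> subf (snd r))"

definition closed :: "node set \<Rightarrow> bool" where
  "closed S \<longleftrightarrow> (\<exists>i \<phi>. (i, \<phi>) \<in> S \<and> (i, Neg \<phi>) \<in> S)"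

definition Tset :: "node \<Rightarrow> node set \<Rightarrow> nat \<Rightarrow> fm set" where
  "Tset r S i = {\<phi>. (i, \<phi>) \<in> S \<and> qsub (i, \<phi>) r}"

definition twins :: "node \<Rightarrow> node set \<Rightarrow> nat \<Rightarrow> nat \<Rightarrow> bool" where
  "twins r S j k \<longleftrightarrow> j \<in> noms_br S \<and> k \<in> noms_br S \<and> Tset r S j = Tset r S k"

definition prec :: "node set \<Rightarrow> (nat \<times> nat) set" where
  "prec A = {(i, j). (i, Dia (Nom j)) \<in> A}"

definition quasi_urfather :: "node \<Rightarrow> node set \<Rightarrow> node set \<Rightarrow> nat \<Rightarrow> bool" where
  "quasi_urfather r S A i \<longleftrightarrow>
     \<not> (\<exists>j k. j \<noteq> k \<and> twins r S j k \<and> (j, i) \<in> (prec A)\<^sup>* \<and> (k, i) \<in> (prec A)\<^sup>*)"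

text \<open>State of a branch during construction: its formulas, the accessibility formulas
  among them, and the formulas to which the Diamond rule has already been applied.\<close>
record bstate =
  br :: "node set"
  acc :: "node set"
  used :: "node set"

text \<open>All rules except [Diamond]: basic_rule S A C means that C is the set of formulas
  added to the branch (for the branching rule [not-and]: to the chosen child) by one
  rule instance whose premises are on the branch S, where A is the set of accessibility
  formulas of the branch.\<close>
inductive basic_rule :: "node set \<Rightarrow> node set \<Rightarrow> node set \<Rightarrow> bool" where
  NegNeg: "(i, Neg (Neg \<phi>)) \<in> S \<Longrightarrow> basic_rule S A {(i, \<phi>)}"
| Conj: "(i, Con \<phi> \<psi>) \<in> S \<Longrightarrow> basic_rule S A {(i, \<phi>), (i, \<psi>)}"
| NegConj1: "(i, Neg (Con \<phi> \<psi>)) \<in> S \<Longrightarrow> basic_rule S A {(i, Neg \<phi>)}"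
| NegConj2: "(i, Neg (Con \<phi> \<psi>)) \<in> S \<Longrightarrow> basic_rule S A {(i, Neg \<psi>)}"
| NegDia: "(i, Neg (Dia \<phi>)) \<in> S \<Longrightarrow> (i, Dia (Nom j)) \<in> S \<Longrightarrow> basic_rule S A {(j, Neg \<phi>)}"
| BoxSym: "(i, Box \<phi>) \<in> S \<Longrightarrow> (j, Dia (Nom i)) \<in> S \<Longrightarrow> basic_rule S A {(j, \<phi>)}"
| At: "(i, At j \<phi>) \<in> S \<Longrightarrow> basic_rule S A {(j, \<phi>)}"
| NegAt: "(i, Neg (At j \<phi>)) \<in> S \<Longrightarrow> basic_rule S A {(j, Neg \<phi>)}"
| Id: "(i, \<phi>) \<in> S \<Longrightarrow> (i, \<phi>) \<notin> A \<Longrightarrow> (i, Nom j) \<in> S \<Longrightarrow> basic_rule S A {(j, \<phi>)}"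
| Ref: "i \<in> noms_br S \<Longrightarrow> basic_rule S A {(i, Nom i)}"
| Irr: "i \<in> noms_br S \<Longrightarrow> basic_rule S A {(i, Neg (Dia (Nom i)))}"

definition tab_step :: "node \<Rightarrow> bstate \<Rightarrow> bstate \<Rightarrow> bool" where
  "tab_step r s s' \<longleftrightarrow> \<not> closed (br s) \<and>
     ((\<exists>C. basic_rule (br s) (acc s) C \<and> \<not> C \<subseteq> br s \<and>
           s' = \<lparr>br = br s \<union> C, acc = acc s, used = used s\<rparr>)
    \<or> (\<exists>i \<phi> j. (i, Dia \<phi>) \<in> br s \<and> (i, Dia \<phi>) \<notin> acc s \<and> (i, Dia \<phi>) \<notin> used s
           \<and> quasi_urfather r (br s) (acc s) i \<and> j \<notin> noms_br (br s)
           \<and> s' = \<lparr>br = br s \<union> {(i, Dia (Nom j)), (j, \<phi>)},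
                   acc = insert (i, Dia (Nom j)) (acc s),
                   used = insert (i, Dia \<phi>) (used s)\<rparr>))"

definition tab_init :: "node \<Rightarrow> bstate" where
  "tab_init r = \<lparr>br = {r}, acc = {}, used = {}\<rparr>"

end

theory Submission
  imports Defs
begin

(* Along a branch, every nominal k can be given an address: the nominal at the root of the
   chain of [Diamond] applications that produced k, together with the list of formulas psi of
   the premises @_p Diamond psi along that chain. Addresses are injective because [Diamond] is
   applied at most once per formula. They are short: [Diamond] only fires at quasi-urfathers,
   whose ancestors carry pairwise distinct sets T(x) of quasi-subformulas of the root formula,
   so a chain has at most 2^|Q| nominals, Q being those quasi-subformulas. Hence a branch has
   boundedly many nominals. Every formula @_i chi on it has chi in Q or among j, not j,
   Diamond j, not Diamond j for a nominal j of the branch, so the branch has bounded size,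
   while every rule application adds a new formula. *)

lemma subf_refl: "\<phi> \<in> subf \<phi>"
  by (cases \<phi>) auto

lemma subf_subset: "\<chi> \<in> subf \<phi> \<Longrightarrow> subf \<chi> \<subseteq> subf \<phi>"
  by (induction \<phi>) auto

lemma finite_subf: "finite (subf \<phi>)"
  by (induction \<phi>) auto

lemma subf_NegD: "Neg \<psi> \<in> subf \<phi> \<Longrightarrow> \<psi> \<in> subf \<phi>"
  using subf_subset[of "Neg \<psi>"] subf_refl by auto

lemma subf_ConD: "Con \<psi> \<chi> \<in> subf \<phi> \<Longrightarrow> \<psi> \<in> subf \<phi> \<and> \<chi> \<in> subf \<phi>"
  using subf_subset[of "Con \<psi> \<chi>"] subf_refl by auto

lemma subf_DiaD: "Dia \<psi> \<in> subf \<phi> \<Longrightarrow> \<psi> \<in> subf \<phi>"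
  using subf_subset[of "Dia \<psi>"] subf_refl by auto

lemma subf_AtD: "At j \<psi> \<in> subf \<phi> \<Longrightarrow> \<psi> \<in> subf \<phi>"
  using subf_subset[of "At j \<psi>"] subf_refl by auto

definition quasi_subfs :: "fm \<Rightarrow> fm set" where
  "quasi_subfs \<phi> = subf \<phi> \<union> Neg ` subf \<phi>"

lemma finite_quasi_subfs: "finite (quasi_subfs \<phi>)"
  by (simp add: quasi_subfs_def finite_subf)

definition fm_closure :: "fm \<Rightarrow> nat set \<Rightarrow> fm set" where
  "fm_closure \<phi> N = quasi_subfs \<phi> \<union> Nom ` N \<union> (\<lambda>k. Neg (Nom k)) ` N \<union> (\<lambda>k. Neg (Dia (Nom k))) ` N"

lemma fm_closure_components:
  "Neg (Neg \<psi>) \<in> fm_closure \<phi> N \<Longrightarrow> \<psi> \<in> fm_closure \<phi> N"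
  "Con \<psi> \<chi> \<in> fm_closure \<phi> N \<Longrightarrow> \<psi> \<in> fm_closure \<phi> N \<and> \<chi> \<in> fm_closure \<phi> N"
  "Neg (Con \<psi> \<chi>) \<in> fm_closure \<phi> N \<Longrightarrow> Neg \<psi> \<in> fm_closure \<phi> N \<and> Neg \<chi> \<in> fm_closure \<phi> N"
  "Neg (Dia \<psi>) \<in> fm_closure \<phi> N \<Longrightarrow> Neg \<psi> \<in> fm_closure \<phi> N"
  "Box \<psi> \<in> fm_closure \<phi> N \<Longrightarrow> \<psi> \<in> fm_closure \<phi> N"
  "At j \<psi> \<in> fm_closure \<phi> N \<Longrightarrow> \<psi> \<in> fm_closure \<phi> N"
  "Neg (At j \<psi>) \<in> fm_closure \<phi> N \<Longrightarrow> Neg \<psi> \<in> fm_closure \<phi> N"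
  by (auto simp: fm_closure_def quasi_subfs_def dest!: subf_NegD subf_ConD subf_DiaD subf_AtD)

lemma fm_closure_DiaD: "Dia \<psi> \<in> fm_closure \<phi> N \<Longrightarrow> \<psi> \<in> subf \<phi>"
  by (auto simp: fm_closure_def quasi_subfs_def dest: subf_DiaD)

lemma fm_closure_mono: "N \<subseteq> M \<Longrightarrow> fm_closure \<phi> N \<subseteq> fm_closure \<phi> M"
  by (auto simp: fm_closure_def)

lemma subf_fm_closure: "\<psi> \<in> subf \<phi> \<Longrightarrow> \<psi> \<in> fm_closure \<phi> N"
  by (simp add: fm_closure_def quasi_subfs_def)

lemma basic_rule_fm_closure:
  assumes "basic_rule S A C"
    and closed: "\<forall>(a, \<chi>) \<in> S - A. \<chi> \<in> fm_closure \<phi> N"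
    and acc: "A \<subseteq> UNIV \<times> range (\<lambda>b. Dia (Nom b))"
    and noms: "noms_br S \<subseteq> N"
  shows "\<forall>(a, \<chi>) \<in> C. \<chi> \<in> fm_closure \<phi> N"
proof -
  have premise: "\<chi> \<in> fm_closure \<phi> N" if "(a, \<chi>) \<in> S" "\<chi> \<notin> range (\<lambda>b. Dia (Nom b))" for a \<chi>
    using that closed acc by fastforce
  from assms(1) show ?thesis
  proof cases
    case (NegNeg i \<psi>)
    then show ?thesis using premise[OF NegNeg(2)] by (auto dest: fm_closure_components)
  next
    case (Conj i \<psi> \<chi>)
    then show ?thesis using premise[OF Conj(2)] by (auto dest: fm_closure_components)
  next
    case (NegConj1 i \<psi> \<chi>)
    then show ?thesis using premise[OF NegConj1(2)] by (auto dest: fm_closure_components)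
  next
    case (NegConj2 i \<psi> \<chi>)
    then show ?thesis using premise[OF NegConj2(2)] by (auto dest: fm_closure_components)
  next
    case (NegDia i \<psi> j)
    then show ?thesis using premise[OF NegDia(2)] by (auto dest: fm_closure_components)
  next
    case (BoxSym i \<psi> j)
    then show ?thesis using premise[OF BoxSym(2)] by (auto dest: fm_closure_components)
  next
    case (At i j \<psi>)
    then show ?thesis using premise[OF At(2)] by (auto dest: fm_closure_components)
  next
    case (NegAt i j \<psi>)
    then show ?thesis using premise[OF NegAt(2)] by (auto dest: fm_closure_components)
  next
    case (Id i \<chi> j)
    then show ?thesis using closed by auto
  qed (use noms in \<open>auto simp: fm_closure_def\<close>)
qed

lemma finite_fm_closure: "finite N \<Longrightarrow> finite (fm_closure \<phi> N)"
  by (simp add: fm_closure_def finite_quasi_subfs)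

lemma card_fm_closure_le:
  assumes "finite N"
  shows "card (fm_closure \<phi> N) \<le> card (quasi_subfs \<phi>) + 3 * card N"
proof -
  have "card (fm_closure \<phi> N) \<le> card (quasi_subfs \<phi>) + card (Nom ` N)
      + card ((\<lambda>k. Neg (Nom k)) ` N) + card ((\<lambda>k. Neg (Dia (Nom k))) ` N)"
    unfolding fm_closure_def by (intro card_Un_le [THEN order_trans] add_mono order_refl)
  also have "\<dots> \<le> card (quasi_subfs \<phi>) + card N + card N + card N"
    by (intro add_mono order_refl card_image_le assms)
  finally show ?thesis by simp
qed

lemma finite_nomsf: "finite (nomsf \<phi>)"
  by (induction \<phi>) auto

lemma noms_br_memD: "(a, \<psi>) \<in> S \<Longrightarrow> insert a (nomsf \<psi>) \<subseteq> noms_br S"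
  unfolding noms_br_def by auto

lemma noms_br_Un: "noms_br (S \<union> T) = noms_br S \<union> noms_br T"
  unfolding noms_br_def by auto

lemma noms_br_empty: "noms_br {} = {}"
  unfolding noms_br_def by simp

lemma noms_br_insert: "noms_br (insert (a, \<psi>) S) = insert a (nomsf \<psi> \<union> noms_br S)"
  unfolding noms_br_def by auto

lemma basic_rule_noms_br: "basic_rule S A C \<Longrightarrow> noms_br C \<subseteq> noms_br S"
  by (induction rule: basic_rule.induct) (auto simp: noms_br_empty noms_br_insert dest!: noms_br_memD)

lemma noms_br_dia_extension:
  "(i, Dia \<psi>) \<in> S \<Longrightarrow> noms_br (S \<union> {(i, Dia (Nom j)), (j, \<psi>)}) = insert j (noms_br S)"
  by (auto simp: noms_br_Un noms_br_insert noms_br_empty dest!: noms_br_memD)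

lemma rtrancl_insert_fresh:
  assumes "j \<notin> Field P"
  shows "(x, k) \<in> (insert (i, j) P)\<^sup>* \<longleftrightarrow> (x, k) \<in> P\<^sup>* \<or> (k = j \<and> (x, i) \<in> P\<^sup>*)"
proof -
  have "(j, y) \<in> P\<^sup>* \<longleftrightarrow> y = j" for y
    using Not_Domain_rtrancl[of j P] assms by (auto simp: Field_def)
  then show ?thesis by (auto simp: rtrancl_insert)
qed

definition ancestors :: "node set \<Rightarrow> nat \<Rightarrow> nat set" where
  "ancestors A k = {x. (x, k) \<in> (prec A)\<^sup>*}"

lemma Field_prec_subset: "A \<subseteq> S \<Longrightarrow> Field (prec A) \<subseteq> noms_br S"
  by (auto simp: prec_def Field_def noms_br_def)

lemma ancestors_subset:
  assumes "A \<subseteq> S" "k \<in> noms_br S"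
  shows "ancestors A k \<subseteq> noms_br S"
proof
  fix x assume "x \<in> ancestors A k"
  then have "x = k \<or> x \<in> Field (prec A)"
    unfolding ancestors_def by (auto elim: converse_rtranclE simp: Field_def)
  then show "x \<in> noms_br S" using assms Field_prec_subset by blast
qed

lemma ancestors_insert_fresh:
  assumes "j \<notin> Field (prec A)"
  shows "ancestors (insert (i, Dia (Nom j)) A) k =
    (if k = j then insert j (ancestors A i) else ancestors A k)"
proof -
  have "prec (insert (i, Dia (Nom j)) A) = insert (i, j) (prec A)"
    by (auto simp: prec_def)
  moreover have "(x, j) \<in> (prec A)\<^sup>* \<longleftrightarrow> x = j" for x
    using assms by (auto elim: rtranclE simp: Field_def)
  ultimately show ?thesis
    using rtrancl_insert_fresh[OF assms] by (auto simp: ancestors_def)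
qed

lemma card_ancestors_new_nominal:
  assumes "A \<subseteq> S" "i \<in> noms_br S" "j \<notin> noms_br S" "finite (noms_br S)"
  shows "card (ancestors (insert (i, Dia (Nom j)) A) j) = Suc (card (ancestors A i))"
proof -
  have "j \<notin> Field (prec A)"
    using Field_prec_subset[OF assms(1)] assms(3) by blast
  moreover have "finite (ancestors A i)" "j \<notin> ancestors A i"
    using ancestors_subset[OF assms(1,2)] assms(3,4) finite_subset by blast+
  ultimately show ?thesis
    by (simp add: ancestors_insert_fresh)
qed

lemma Tset_subset_quasi_subfs: "Tset (i, \<phi>) S k \<subseteq> quasi_subfs \<phi>"
  by (auto simp: Tset_def qsub_def quasi_subfs_def)

lemma card_ancestors_quasi_urfather:
  assumes "quasi_urfather (i, \<phi>) S A k" "A \<subseteq> S" "k \<in> noms_br S"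
  shows "card (ancestors A k) \<le> 2 ^ card (quasi_subfs \<phi>)"
proof -
  have "inj_on (Tset (i, \<phi>) S) (ancestors A k)"
  proof (rule inj_onI)
    fix x y assume "x \<in> ancestors A k" "y \<in> ancestors A k" "Tset (i, \<phi>) S x = Tset (i, \<phi>) S y"
    moreover from this have "twins (i, \<phi>) S x y"
      using ancestors_subset[OF assms(2,3)] by (auto simp: twins_def)
    ultimately show "x = y" using assms(1) by (auto simp: quasi_urfather_def ancestors_def)
  qed
  then have "card (ancestors A k) \<le> card (Pow (quasi_subfs \<phi>))"
    by (rule card_inj_on_le) (auto simp: finite_quasi_subfs dest: Tset_subset_quasi_subfs[THEN subsetD])
  then show ?thesis by (simp add: card_Pow finite_quasi_subfs)
qed

definition address_space :: "nat \<Rightarrow> fm \<Rightarrow> (nat \<times> fm list) set" where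
  "address_space i \<phi> = insert i (nomsf \<phi>) \<times>
     {xs. set xs \<subseteq> subf \<phi> \<and> length xs \<le> 2 ^ card (quasi_subfs \<phi>)}"

lemma finite_address_space: "finite (address_space i \<phi>)"
  unfolding address_space_def
  by (intro finite_cartesian_product finite_lists_length_le) (simp_all add: finite_nomsf finite_subf)

definition address_ok :: "nat \<Rightarrow> fm \<Rightarrow> bstate \<Rightarrow> (nat \<Rightarrow> nat \<times> fm list) \<Rightarrow> nat \<Rightarrow> bool" where
  "address_ok i \<phi> s addr k \<longleftrightarrow> addr k \<in> address_space i \<phi> \<and>
     length (snd (addr k)) < card (ancestors (acc s) k) \<and>
     (\<forall>xs \<psi>. snd (addr k) = xs @ [\<psi>] \<longrightarrow>
        (\<exists>p \<in> noms_br (br s). addr p = (fst (addr k), xs) \<and> (p, Dia \<psi>) \<in> used s))"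

definition addressing :: "nat \<Rightarrow> fm \<Rightarrow> bstate \<Rightarrow> (nat \<Rightarrow> nat \<times> fm list) \<Rightarrow> bool" where
  "addressing i \<phi> s addr \<longleftrightarrow>
     inj_on addr (noms_br (br s)) \<and> (\<forall>k \<in> noms_br (br s). address_ok i \<phi> s addr k)"

lemma addressing_finite_noms_br:
  assumes "addressing i \<phi> s addr"
  shows "finite (noms_br (br s))" "card (noms_br (br s)) \<le> card (address_space i \<phi>)"
proof -
  have inj: "inj_on addr (noms_br (br s))" and into: "addr ` noms_br (br s) \<subseteq> address_space i \<phi>"
    using assms by (auto simp: addressing_def address_ok_def)
  show "finite (noms_br (br s))"
    using inj_on_finite[OF inj into finite_address_space] .
  show "card (noms_br (br s)) \<le> card (address_space i \<phi>)"
    using card_inj_on_le[OF inj into finite_address_space] .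
qed

lemma addressing_new_address:
  assumes addr: "addressing i \<phi> s addr"
    and i0: "i0 \<in> noms_br (br s)" and unused: "(i0, Dia \<psi>) \<notin> used s"
  shows "(fst (addr i0), snd (addr i0) @ [\<psi>]) \<notin> addr ` noms_br (br s)"
proof
  assume "(fst (addr i0), snd (addr i0) @ [\<psi>]) \<in> addr ` noms_br (br s)"
  then obtain k where "k \<in> noms_br (br s)" and k: "addr k = (fst (addr i0), snd (addr i0) @ [\<psi>])"
    by auto
  with addr have "address_ok i \<phi> s addr k"
    by (simp add: addressing_def)
  with k obtain p where "p \<in> noms_br (br s)" "addr p = addr i0" "(p, Dia \<psi>) \<in> used s"
    by (auto simp: address_ok_def)
  moreover from this(1,2) have "p = i0"
    using addr i0 by (auto simp: addressing_def dest: inj_onD)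
  ultimately show False using unused by simp
qed

lemma addressing_dia_step:
  assumes addr: "addressing i \<phi> s addr"
    and acc_br: "acc s \<subseteq> br s"
    and dia: "(i0, Dia \<psi>) \<in> br s" "(i0, Dia \<psi>) \<notin> used s" "\<psi> \<in> subf \<phi>"
    and qu: "quasi_urfather (i, \<phi>) (br s) (acc s) i0"
    and j: "j \<notin> noms_br (br s)"
  shows "addressing i \<phi>
    \<lparr>br = br s \<union> {(i0, Dia (Nom j)), (j, \<psi>)}, acc = insert (i0, Dia (Nom j)) (acc s),
     used = insert (i0, Dia \<psi>) (used s)\<rparr>
    (addr(j := (fst (addr i0), snd (addr i0) @ [\<psi>])))"
    (is "addressing i \<phi> ?s' ?addr'")
proof -
  let ?N = "noms_br (br s)"
  have inj: "inj_on addr ?N" and old: "\<And>k. k \<in> ?N \<Longrightarrow> address_ok i \<phi> s addr k"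
    using addr by (auto simp: addressing_def)
  have i0: "i0 \<in> ?N"
    using noms_br_memD[OF dia(1)] by auto
  have N': "noms_br (br ?s') = insert j ?N"
    using noms_br_dia_extension[OF dia(1)] by simp
  have "j \<notin> Field (prec (acc s))"
    using Field_prec_subset[OF acc_br] j by blast
  then have ancestors_old: "ancestors (acc ?s') k = ancestors (acc s) k" if "k \<in> ?N" for k
    using that j by (auto simp: ancestors_insert_fresh)
  have card_j: "card (ancestors (acc ?s') j) = Suc (card (ancestors (acc s) i0))"
    using card_ancestors_new_nominal[OF acc_br i0 j addressing_finite_noms_br(1)[OF addr]] by simp
  have depth: "card (ancestors (acc s) i0) \<le> 2 ^ card (quasi_subfs \<phi>)"
    using card_ancestors_quasi_urfather[OF qu acc_br i0] .
  have "?addr' ` ?N = addr ` ?N" "inj_on ?addr' ?N"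
    using inj j by (auto simp: inj_on_def)
  then have "inj_on ?addr' (insert j ?N)"
    using addressing_new_address[OF addr i0 dia(2)] j by simp
  moreover have "address_ok i \<phi> ?s' ?addr' j"
    unfolding address_ok_def bstate.select_convs noms_br_dia_extension[OF dia(1)]
    using old[OF i0] depth card_j dia(3) i0 j
    by (auto simp: address_ok_def address_space_def intro!: bexI[of _ i0])
  moreover have "address_ok i \<phi> ?s' ?addr' k" if "k \<in> ?N" for k
    using old[OF that] that j ancestors_old[OF that]
    unfolding address_ok_def bstate.select_convs noms_br_dia_extension[OF dia(1)] by fastforce
  ultimately show ?thesis
    unfolding addressing_def N' by auto
qed

(* Accessibility formulas are exempt from the closure condition; since [Id] never copies them,
   every other formula @_i Diamond psi on the branch has psi a subformula of the root formula,
   which keeps the entries of addresses within subf phi. *)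
definition tab_inv :: "nat \<Rightarrow> fm \<Rightarrow> bstate \<Rightarrow> bool" where
  "tab_inv i \<phi> s \<longleftrightarrow>
     acc s \<subseteq> br s \<inter> (UNIV \<times> range (\<lambda>b. Dia (Nom b))) \<and>
     (\<forall>(a, \<psi>) \<in> br s - acc s. \<psi> \<in> fm_closure \<phi> (noms_br (br s))) \<and>
     (\<exists>addr. addressing i \<phi> s addr)"

lemma tab_inv_init: "tab_inv i \<phi> (tab_init (i, \<phi>))"
proof -
  have "ancestors {} k = {k}" for k
    by (simp add: ancestors_def prec_def)
  then have "addressing i \<phi> (tab_init (i, \<phi>)) (\<lambda>k. (k, []))"
    by (auto simp: addressing_def address_ok_def tab_init_def address_space_def inj_on_def
        noms_br_insert noms_br_empty)
  then show ?thesis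
    by (auto simp: tab_inv_def tab_init_def fm_closure_def quasi_subfs_def subf_refl)
qed

lemma tab_inv_basic_step:
  assumes inv: "tab_inv i \<phi> s" and rule: "basic_rule (br s) (acc s) C"
  shows "tab_inv i \<phi> \<lparr>br = br s \<union> C, acc = acc s, used = used s\<rparr>"
proof -
  have acc: "acc s \<subseteq> br s \<inter> (UNIV \<times> range (\<lambda>b. Dia (Nom b)))"
    and closed: "\<forall>(a, \<chi>) \<in> br s - acc s. \<chi> \<in> fm_closure \<phi> (noms_br (br s))"
    and addr: "\<exists>addr. addressing i \<phi> s addr"
    using inv by (simp_all add: tab_inv_def)
  have N: "noms_br (br s \<union> C) = noms_br (br s)"
    using basic_rule_noms_br[OF rule] by (auto simp: noms_br_Un)
  have "\<forall>(a, \<chi>) \<in> C. \<chi> \<in> fm_closure \<phi> (noms_br (br s))"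
    using acc by (intro basic_rule_fm_closure[OF rule closed]) auto
  moreover have "addressing i \<phi> \<lparr>br = br s \<union> C, acc = acc s, used = used s\<rparr> = addressing i \<phi> s"
    by (simp add: addressing_def address_ok_def N fun_eq_iff)
  ultimately show ?thesis
    using acc closed addr unfolding tab_inv_def bstate.select_convs N by auto
qed

lemma tab_inv_dia_step:
  assumes inv: "tab_inv i \<phi> s"
    and dia: "(i0, Dia \<psi>) \<in> br s" "(i0, Dia \<psi>) \<notin> acc s" "(i0, Dia \<psi>) \<notin> used s"
    and qu: "quasi_urfather (i, \<phi>) (br s) (acc s) i0"
    and j: "j \<notin> noms_br (br s)"
  shows "tab_inv i \<phi>
    \<lparr>br = br s \<union> {(i0, Dia (Nom j)), (j, \<psi>)}, acc = insert (i0, Dia (Nom j)) (acc s),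
     used = insert (i0, Dia \<psi>) (used s)\<rparr>"
proof -
  let ?N = "noms_br (br s)"
  have acc: "acc s \<subseteq> br s \<inter> (UNIV \<times> range (\<lambda>b. Dia (Nom b)))"
    and closed: "\<forall>(a, \<chi>) \<in> br s - acc s. \<chi> \<in> fm_closure \<phi> ?N"
    and addr: "\<exists>addr. addressing i \<phi> s addr"
    using inv by (auto simp: tab_inv_def)
  have \<psi>: "\<psi> \<in> subf \<phi>"
    using closed dia(1,2) by (auto dest: fm_closure_DiaD)
  have "fm_closure \<phi> ?N \<subseteq> fm_closure \<phi> (insert j ?N)"
    by (rule fm_closure_mono) blast
  with closed \<psi> have "\<forall>(a, \<chi>) \<in> br s \<union> {(i0, Dia (Nom j)), (j, \<psi>)} - insert (i0, Dia (Nom j)) (acc s).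
      \<chi> \<in> fm_closure \<phi> (insert j ?N)"
    by (auto simp: subf_fm_closure)
  moreover have "\<exists>addr. addressing i \<phi>
    \<lparr>br = br s \<union> {(i0, Dia (Nom j)), (j, \<psi>)}, acc = insert (i0, Dia (Nom j)) (acc s),
     used = insert (i0, Dia \<psi>) (used s)\<rparr> addr"
    using addressing_dia_step[OF _ _ dia(1,3) \<psi> qu j] addr acc by blast
  ultimately show ?thesis
    using acc unfolding tab_inv_def bstate.select_convs noms_br_dia_extension[OF dia(1)] by auto
qed

lemma tab_inv_step: "tab_step (i, \<phi>) s s' \<Longrightarrow> tab_inv i \<phi> s \<Longrightarrow> tab_inv i \<phi> s'"
  unfolding tab_step_def using tab_inv_basic_step tab_inv_dia_step by auto

lemma tab_inv_bounded_br:
  assumes inv: "tab_inv i \<phi> s"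
  defines "K \<equiv> card (address_space i \<phi>)"
  shows "finite (br s)" "card (br s) \<le> K * (card (quasi_subfs \<phi>) + 4 * K)"
proof -
  let ?N = "noms_br (br s)"
  let ?H = "fm_closure \<phi> ?N \<union> (\<lambda>k. Dia (Nom k)) ` ?N"
  from inv obtain addr where "addressing i \<phi> s addr"
    by (auto simp: tab_inv_def)
  then have fin_N: "finite ?N" and card_N: "card ?N \<le> K"
    unfolding K_def by (rule addressing_finite_noms_br)+
  have fin_H: "finite ?H"
    using fin_N by (simp add: finite_fm_closure)
  have "br s \<subseteq> ?N \<times> ?H"
  proof
    fix x assume x: "x \<in> br s"
    obtain a \<chi> where x_eq: "x = (a, \<chi>)" by fastforce
    have noms_x: "insert a (nomsf \<chi>) \<subseteq> ?N"
      using noms_br_memD x x_eq by blast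
    have "x \<in> acc s \<Longrightarrow> \<chi> \<in> range (\<lambda>b. Dia (Nom b))"
      and "x \<notin> acc s \<Longrightarrow> \<chi> \<in> fm_closure \<phi> ?N"
      using inv x x_eq by (auto simp: tab_inv_def)
    then show "x \<in> ?N \<times> ?H"
      using noms_x x_eq by (cases "x \<in> acc s") auto
  qed
  then show "finite (br s)"
    using fin_N fin_H finite_subset by blast
  have "card (br s) \<le> card (?N \<times> ?H)"
    using \<open>br s \<subseteq> ?N \<times> ?H\<close> fin_N fin_H by (intro card_mono) simp_all
  also have "\<dots> = card ?N * card ?H"
    by (rule card_cartesian_product)
  also have "card ?H \<le> card (quasi_subfs \<phi>) + 3 * card ?N + card ?N"
    using card_Un_le[of "fm_closure \<phi> ?N" "(\<lambda>k. Dia (Nom k)) ` ?N"] card_fm_closure_le[OF fin_N, of \<phi>]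
      card_image_le[OF fin_N, of "\<lambda>k. Dia (Nom k)"] by linarith
  then have "card ?N * card ?H \<le> K * (card (quasi_subfs \<phi>) + 4 * K)"
    using card_N by (intro mult_mono) auto
  finally show "card (br s) \<le> K * (card (quasi_subfs \<phi>) + 4 * K)" .
qed

lemma tab_step_br_psubset: "tab_step r s s' \<Longrightarrow> br s \<subset> br s'"
  unfolding tab_step_def
proof (elim conjE disjE exE)
  fix C assume "\<not> C \<subseteq> br s" "s' = \<lparr>br = br s \<union> C, acc = acc s, used = used s\<rparr>"
  then show "br s \<subset> br s'" by auto
next
  fix i \<psi> j assume "j \<notin> noms_br (br s)"
    and s': "s' = \<lparr>br = br s \<union> {(i, Dia (Nom j)), (j, \<psi>)},
      acc = insert (i, Dia (Nom j)) (acc s), used = insert (i, Dia \<psi>) (used s)\<rparr>"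
  then have "(i, Dia (Nom j)) \<notin> br s"
    using noms_br_memD[of i "Dia (Nom j)" "br s"] by auto
  then show "br s \<subset> br s'" using s' by auto
qed

lemma no_strict_chain_of_bounded_card:
  assumes "\<And>n. F n \<subset> F (Suc n)" "\<And>n. finite (F n)" "\<And>n. card (F n) \<le> M"
  shows False
proof -
  have "n \<le> card (F n)" for n
  proof (induction n)
    case (Suc n)
    with psubset_card_mono[OF assms(2) assms(1), of n] show ?case by simp
  qed simp
  with assms(3)[of "Suc M"] show False
    by (metis not_less_eq_eq)
qed

theorem theorem3:
  fixes i :: nat and \<phi> :: fm
  assumes "i \<notin> nomsf \<phi>"
  shows "\<not> (\<exists>f. f 0 = tab_init (i, \<phi>) \<and> (\<forall>n. tab_step (i, \<phi>) (f n) (f (Suc n))))"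
proof
  assume "\<exists>f. f 0 = tab_init (i, \<phi>) \<and> (\<forall>n. tab_step (i, \<phi>) (f n) (f (Suc n)))"
  then obtain f where f0: "f 0 = tab_init (i, \<phi>)"
    and step: "\<And>n. tab_step (i, \<phi>) (f n) (f (Suc n))"
    by blast
  have inv: "tab_inv i \<phi> (f n)" for n
    by (induction n) (simp_all add: f0 tab_inv_init tab_inv_step[OF step])
  show False
  proof (rule no_strict_chain_of_bounded_card)
    show "br (f n) \<subset> br (f (Suc n))" for n
      using step by (rule tab_step_br_psubset)
    show "finite (br (f n))" for n
      using inv by (rule tab_inv_bounded_br)
    show "card (br (f n)) \<le> card (address_space i \<phi>) *
        (card (quasi_subfs \<phi>) + 4 * card (address_space i \<phi>))" for n
      using inv by (rule tab_inv_bounded_br)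
  qed
qed

end
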